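(* Let $T$ be a string and $T'$ be obtained from $T$ by a single character edit (insertion, substitution, or deletion). Let $\mathcal{N}_2=\big((\mathsf{M}(T')\setminus\mathsf{M}(T))\setminus\{T'\}\big)\cap\mathsf{LeftM}(T)$ and $\mathcal{Q}=(\mathsf{M}(T')\cap\mathsf{M}(T))\setminus\{T'\}$. Then $$\sum_{x\in\mathcal{N}_2\cup\mathcal{Q}}\mathsf{D}_{T'}(x)\le 3\,\mathsf{size}(T)+2 .$$
   Context: Strings are over an alphabet $\Sigma$; $\mathrm{Substr}(T)$, $\mathrm{Prefix}(T)$, $\mathrm{Suffix}(T)$ are the sets of substrings, prefixes, suffixes of $T$. A string $w\in\mathrm{Substr}(T)$ is left-maximal in $T$ if $w\in\mathrm{Prefix}(T)$ or there exist distinct $a,b\in\Sigma$ with $aw,bw\in\mathrm{Substr}(T)$; right-maximal if $w\in\mathrm{Suffix}(T)$ or there exist distinct $a,b$ with $wa,wb\in\mathrm{Substr}(T)$. $\mathsf{LeftM}(T)$, $\mathsf{RightM}(T)$ denote these sets and $\mathsf{M}(T)=\mathsf{LeftM}(T)\cap\mathsf{RightM}(T)$. For a string $x$, $\mathsf{D}_T(x)=|\{a\in\Sigma: xa\in\mathrm{Substr}(T)\}|$, and $\mathsf{size}(T)=\sum_{x\in\mathsf{M}(T)}\mathsf{D}_T(x)$ (number of edges of the CDAWG of $T$). A single character edit means: insertion of one character at some position, substitution of one character by a different one, or deletion of one character. *)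

theory Defs
  imports Main "HOL-Library.Sublist"
begin

definition Substr :: "'a list \<Rightarrow> 'a list set" where
  "Substr T = {w. sublist w T}"

definition Prefixes :: "'a list \<Rightarrow> 'a list set" where
  "Prefixes T = {w. prefix w T}"

definition Suffixes :: "'a list \<Rightarrow> 'a list set" where
  "Suffixes T = {w. suffix w T}"

definition LeftM :: "'a list \<Rightarrow> 'a list set" where
  "LeftM T = {w \<in> Substr T. w \<in> Prefixes T \<or>
      (\<exists>a b. a \<noteq> b \<and> a # w \<in> Substr T \<and> b # w \<in> Substr T)}"

definition RightM :: "'a list \<Rightarrow> 'a list set" where
  "RightM T = {w \<in> Substr T. w \<in> Suffixes T \<or>
      (\<exists>a b. a \<noteq> b \<and> w @ [a] \<in> Substr T \<and> w @ [b] \<in> Substr T)}"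

definition MaxRep :: "'a list \<Rightarrow> 'a list set" where
  "MaxRep T = LeftM T \<inter> RightM T"

definition Dout :: "'a list \<Rightarrow> 'a list \<Rightarrow> nat" where
  "Dout T x = card {a. x @ [a] \<in> Substr T}"

definition cdawg_size :: "'a list \<Rightarrow> nat" where
  "cdawg_size T = (\<Sum>x\<in>MaxRep T. Dout T x)"

definition single_edit :: "'a list \<Rightarrow> 'a list \<Rightarrow> bool" where
  "single_edit T T' \<longleftrightarrow> (\<exists>u v c.
      (T = u @ v \<and> T' = u @ c # v) \<or>
      (\<exists>d. d \<noteq> c \<and> T = u @ d # v \<and> T' = u @ c # v) \<or>
      (T = u @ c # v \<and> T' = u @ v))"

end

theory Submission
  imports Defs
begin

(* Write T = u w0 v and T' = u w v with |w| <= 1. Every string x counted is left-maximal in T,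
   so D_T'(x) is at most D_T(x) plus the number of new right extensions x c (substrings of T'
   but not of T), and D_T(x) <= 1 unless x is right-maximal in T. Hence the sum is at most
   size(T), plus one for each x that became right-maximal, plus the number of new extensions.

   A new extension or a new right-maximality of x is witnessed by an occurrence in T' lying
   neither inside u nor inside v. It starts at some j <= |u| such that u[j..] is a prefix of x,
   hence left-maximal in T, and x is the longest prefix of T'[j..] occurring in T, so j
   determines x (and c). Extending each left-maximal suffix of u along T until it becomes
   right-maximal yields pairwise distinct maximal repeats of T, so there are at most
   |M(T)| <= size(T) + 1 such positions j. *)

lemma finite_Substr: "finite (Substr T)"
  unfolding Substr_def set_sublists_eq[symmetric] by (rule List.finite_set)

lemma Substr_sublist_closed: "sublist x y \<Longrightarrow> y \<in> Substr T \<Longrightarrow> x \<in> Substr T"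
  unfolding Substr_def using sublist_order.order_trans by blast

lemma Substr_appendI: "T = p @ w @ q \<Longrightarrow> w \<in> Substr T"
  unfolding Substr_def by auto

lemma LeftM_Substr: "LeftM T \<subseteq> Substr T"
  unfolding LeftM_def by auto

lemma finite_LeftM: "finite (LeftM T)"
  using finite_Substr LeftM_Substr finite_subset by blast

lemma finite_MaxRep: "finite (MaxRep T)"
  unfolding MaxRep_def using finite_LeftM by blast

lemma finite_right_extensions: "finite {a. x @ [a] \<in> Substr T}"
proof -
  have "{a. x @ [a] \<in> Substr T} \<subseteq> set T"
    unfolding Substr_def using set_mono_sublist by fastforce
  then show ?thesis using finite_subset by blast
qed

lemma LeftM_prefix_closed:
  assumes "x \<in> LeftM T" "prefix s x"
  shows "s \<in> LeftM T"
proof -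
  have s_sub: "s \<in> Substr T"
    using assms LeftM_Substr Substr_sublist_closed prefix_imp_sublist by blast
  from assms(1) consider "x \<in> Prefixes T"
    | a b where "a \<noteq> b" "a # x \<in> Substr T" "b # x \<in> Substr T"
    unfolding LeftM_def by blast
  then show ?thesis
  proof cases
    case 1
    then have "s \<in> Prefixes T"
      using assms(2) unfolding Prefixes_def using prefix_order.order_trans by blast
    then show ?thesis using s_sub unfolding LeftM_def by blast
  next
    case 2
    have "prefix (a # s) (a # x)" "prefix (b # s) (b # x)" using assms(2) by auto
    then have "a # s \<in> Substr T" "b # s \<in> Substr T"
      using 2 Substr_sublist_closed prefix_imp_sublist by blast+
    then show ?thesis using 2(1) s_sub unfolding LeftM_def by blast
  qed
qed

lemma Dout_le_1_if_not_RightM: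
  assumes "x \<in> Substr T" "x \<notin> RightM T"
  shows "Dout T x \<le> 1"
proof -
  have "a = b" if "x @ [a] \<in> Substr T" "x @ [b] \<in> Substr T" for a b
    using assms that unfolding RightM_def by blast
  then show ?thesis
    unfolding Dout_def by (simp add: card_le_Suc0_iff_eq[OF finite_right_extensions])
qed

lemma right_extension_exists:
  assumes "y \<in> LeftM T" "y \<noteq> T"
  shows "\<exists>a. y @ [a] \<in> Substr T"
proof (rule ccontr)
  assume none: "\<nexists>a. y @ [a] \<in> Substr T"
  have at_end: "q = []" if "T = p @ y @ q" for p q
  proof (cases q)
    case (Cons c q')
    then have "y @ [c] \<in> Substr T" using that Substr_appendI[of T p "y @ [c]" q'] by simp
    with none show ?thesis by blast
  qed
  from assms(1) consider t where "T = y @ t"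
    | a b p1 q1 p2 q2 where "a \<noteq> b" "T = p1 @ (a # y) @ q1" "T = p2 @ (b # y) @ q2"
    unfolding LeftM_def Prefixes_def Substr_def prefix_def sublist_def by blast
  then show False
  proof cases
    case 1
    then show False using at_end[of "[]" t] assms(2) by simp
  next
    case 2
    have "q1 = []" "q2 = []" using 2 at_end[of "p1 @ [a]" q1] at_end[of "p2 @ [b]" q2] by simp_all
    then have "(p1 @ [a]) @ y = (p2 @ [b]) @ y" using 2 by simp
    then show False using 2(1) by simp
  qed
qed

lemma card_MaxRep_le: "card (MaxRep T) \<le> cdawg_size T + 1"
proof -
  have "card (MaxRep T - {T}) = (\<Sum>y\<in>MaxRep T - {T}. 1)" by simp
  also have "\<dots> \<le> (\<Sum>y\<in>MaxRep T - {T}. Dout T y)"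
  proof (rule sum_mono)
    fix y assume "y \<in> MaxRep T - {T}"
    then obtain a where "a \<in> {a. y @ [a] \<in> Substr T}"
      using right_extension_exists unfolding MaxRep_def by blast
    then show "1 \<le> Dout T y"
      unfolding Dout_def using finite_right_extensions by (simp add: Suc_le_eq card_gt_0_iff) blast
  qed
  also have "\<dots> \<le> cdawg_size T"
    unfolding cdawg_size_def by (rule sum_mono2) (use finite_MaxRep in auto)
  finally have "card (MaxRep T - {T}) \<le> cdawg_size T" .
  moreover have "card (MaxRep T) \<le> card (MaxRep T - {T}) + 1"
    by (simp add: card_Diff_singleton_if finite_MaxRep; arith)
  ultimately show ?thesis by linarith
qed

lemma not_RightM_occurrence_continues:
  assumes "w \<notin> RightM T" "T = p @ w @ q" "w @ [b] \<in> Substr T"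
  shows "\<exists>q'. q = b # q'"
proof (cases q)
  case Nil
  then have "w \<in> Suffixes T" using assms(2) unfolding Suffixes_def suffix_def by simp
  then show ?thesis using assms(1,2) Substr_appendI unfolding RightM_def by blast
next
  case (Cons c q')
  then have "w @ [c] \<in> Substr T" using assms(2) Substr_appendI[of T p "w @ [c]" q'] by simp
  then have "c = b" using assms Substr_appendI unfolding RightM_def by blast
  then show ?thesis using Cons by blast
qed

lemma LeftM_snoc_if_not_RightM:
  assumes L: "w \<in> LeftM T" and R: "w \<notin> RightM T" and b: "w @ [b] \<in> Substr T"
  shows "w @ [b] \<in> LeftM T"
proof -
  from L consider t where "T = [] @ w @ t"
    | a a' where "a \<noteq> a'" "a # w \<in> Substr T" "a' # w \<in> Substr T"
    unfolding LeftM_def Prefixes_def prefix_def by auto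
  then show ?thesis
  proof cases
    case 1
    then obtain t' where "T = (w @ [b]) @ t'"
      using not_RightM_occurrence_continues[OF R 1 b] by auto
    then show ?thesis using b unfolding LeftM_def Prefixes_def by auto
  next
    case 2
    have extend: "a0 # w @ [b] \<in> Substr T" if a0w: "a0 # w \<in> Substr T" for a0
    proof -
      obtain p q where "T = p @ (a0 # w) @ q"
        using a0w unfolding Substr_def sublist_def by blast
      then have "T = (p @ [a0]) @ w @ q" by simp
      with not_RightM_occurrence_continues[OF R this b] obtain q' where "T = p @ (a0 # w @ [b]) @ q'"
        by auto
      then show ?thesis by (rule Substr_appendI)
    qed
    show ?thesis using 2 extend b unfolding LeftM_def by blast
  qed
qed

definition closure_len :: "'a list \<Rightarrow> 'a list \<Rightarrow> 'a list \<Rightarrow> nat" where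
  "closure_len T s r = (LEAST m. s @ take m r \<in> RightM T)"

locale occurrence =
  fixes T p s r :: "'a list"
  assumes T_eq: "T = p @ s @ r"
begin

abbreviation m :: nat where "m \<equiv> closure_len T s r"

lemma Substr_take: "s @ take k r \<in> Substr T"
  using T_eq Substr_appendI[of T p "s @ take k r" "drop k r"] by simp

lemma RightM_whole: "s @ take (length r) r \<in> RightM T"
  using T_eq Substr_take[of "length r"] unfolding RightM_def Suffixes_def suffix_def by auto

lemma closure_len_le: "m \<le> length r"
  unfolding closure_len_def by (rule Least_le[where P = "\<lambda>k. s @ take k r \<in> RightM T", OF RightM_whole])

lemma closure_RightM: "s @ take m r \<in> RightM T"
  unfolding closure_len_def by (rule LeastI[where P = "\<lambda>k. s @ take k r \<in> RightM T", OF RightM_whole])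

lemma not_RightM_below_closure: "k < m \<Longrightarrow> s @ take k r \<notin> RightM T"
  unfolding closure_len_def by (rule not_less_Least)

lemma take_Suc_below_closure: "k < m \<Longrightarrow> take (Suc k) r = take k r @ [r ! k]"
  using closure_len_le by (simp add: take_Suc_conv_app_nth)

lemma LeftM_below_closure:
  assumes "s \<in> LeftM T"
  shows "k \<le> m \<Longrightarrow> s @ take k r \<in> LeftM T"
proof (induction k)
  case 0
  then show ?case using assms by simp
next
  case (Suc k)
  then have "s @ take k r \<in> LeftM T" by simp
  moreover have "(s @ take k r) @ [r ! k] \<in> Substr T"
    using Substr_take[of "Suc k"] take_Suc_below_closure Suc.prems by simp
  ultimately have "(s @ take k r) @ [r ! k] \<in> LeftM T"
    using LeftM_snoc_if_not_RightM[of "s @ take k r" T "r ! k"] not_RightM_below_closure[of k] Suc.prems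
    by simp
  then show ?case using take_Suc_below_closure Suc.prems by simp
qed

lemma closure_MaxRep: "s \<in> LeftM T \<Longrightarrow> s @ take m r \<in> MaxRep T"
  using LeftM_below_closure closure_RightM unfolding MaxRep_def by blast

lemma occurrences_continue_to_closure:
  "k \<le> m \<Longrightarrow> T = p' @ s @ q \<Longrightarrow> prefix (take k r) q"
proof (induction k arbitrary: q)
  case 0
  then show ?case by simp
next
  case (Suc k)
  then have "prefix (take k r) q" by simp
  then obtain q' where q: "q = take k r @ q'" unfolding prefix_def by blast
  have occ: "T = p' @ (s @ take k r) @ q'" using Suc.prems(2) q by simp
  have ext: "(s @ take k r) @ [r ! k] \<in> Substr T"
    using Substr_take[of "Suc k"] take_Suc_below_closure Suc.prems(1) by simp
  have "s @ take k r \<notin> RightM T" using not_RightM_below_closure Suc.prems(1) by simp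
  then obtain q'' where "q' = r ! k # q''"
    using not_RightM_occurrence_continues[OF _ occ ext] by blast
  then show ?case using q take_Suc_below_closure Suc.prems(1) by simp
qed

(* Each occurrence of the closure contains an occurrence of s |w| positions further right,
   which again continues to the closure: the closure would occur arbitrarily far right. *)
lemma closure_not_shifted:
  assumes "w \<noteq> []"
  shows "s @ take m r \<noteq> w @ s @ t"
proof
  define y where "y = s @ take m r"
  assume shifted: "s @ take m r = w @ s @ t"
  have "\<exists>p' q. T = p' @ y @ q \<and> n \<le> length p'" for n
  proof (induction n)
    case 0
    have "T = p @ y @ drop m r" unfolding y_def using T_eq by simp
    then show ?case by blast
  next
    case (Suc n)
    then obtain p' q where occ: "T = p' @ y @ q" and n: "n \<le> length p'" by blast
    then have T_shift: "T = (p' @ w) @ s @ (t @ q)" using shifted unfolding y_def by simp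
    then have "prefix (take m r) (t @ q)" by (rule occurrences_continue_to_closure[OF le_refl])
    then obtain q' where "t @ q = take m r @ q'" unfolding prefix_def by blast
    then have "T = (p' @ w) @ (s @ take m r) @ q'" using T_shift by simp
    then have "T = (p' @ w) @ y @ q'" unfolding y_def .
    moreover have "Suc n \<le> length (p' @ w)" using n assms by (cases w) auto
    ultimately show ?case by blast
  qed
  then obtain p' q where "T = p' @ y @ q" "Suc (length T) \<le> length p'" by blast
  then show False by simp
qed

end

definition left_maximal_suffix_starts :: "'a list \<Rightarrow> 'a list \<Rightarrow> nat set" where
  "left_maximal_suffix_starts T u = {j. j \<le> length u \<and> drop j u \<in> LeftM T}"

lemma card_left_maximal_suffix_starts:
  assumes T: "T = u @ r"
  shows "card (left_maximal_suffix_starts T u) \<le> card (MaxRep T)"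
proof -
  let ?J = "left_maximal_suffix_starts T u"
  let ?closure = "\<lambda>j. drop j u @ take (closure_len T (drop j u) r) r"
  have occ: "occurrence T (take j u) (drop j u) r" for j
    using T by unfold_locales simp
  have distinct: "?closure j1 \<noteq> ?closure j2" if "j2 < j1" "j1 \<le> length u" for j1 j2
  proof -
    define w where "w = take (j1 - j2) (drop j2 u)"
    have "drop j2 u = w @ drop (j1 - j2) (drop j2 u)"
      unfolding w_def by (rule append_take_drop_id[symmetric])
    also have "drop (j1 - j2) (drop j2 u) = drop j1 u" using that by simp
    finally have shift: "?closure j2 = w @ drop j1 u @ take (closure_len T (drop j2 u) r) r"
      by simp
    have "w \<noteq> []" unfolding w_def using that by simp
    then have "?closure j1 \<noteq> w @ drop j1 u @ take (closure_len T (drop j2 u) r) r"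
      by (rule occurrence.closure_not_shifted[OF occ])
    then show ?thesis unfolding shift .
  qed
  have "inj_on ?closure ?J"
  proof (rule inj_onI)
    fix j1 j2 assume J: "j1 \<in> ?J" "j2 \<in> ?J" and eq: "?closure j1 = ?closure j2"
    then have "j1 \<le> length u" "j2 \<le> length u" unfolding left_maximal_suffix_starts_def by auto
    then show "j1 = j2"
      using distinct[of j1 j2] distinct[of j2 j1] eq by (cases j1 j2 rule: linorder_cases) simp_all
  qed
  moreover have "?closure ` ?J \<subseteq> MaxRep T"
  proof
    fix y assume "y \<in> ?closure ` ?J"
    then obtain j where "drop j u \<in> LeftM T" "y = ?closure j"
      unfolding left_maximal_suffix_starts_def by blast
    then show "y \<in> MaxRep T" using occurrence.closure_MaxRep[OF occ[of j]] by simp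
  qed
  ultimately show ?thesis by (rule card_inj_on_le[OF _ _ finite_MaxRep])
qed

lemma single_edit_decomposition:
  assumes "single_edit T T'"
  obtains u w0 w v where "T = u @ w0 @ v" "T' = u @ w @ v" "length w \<le> 1"
proof -
  from assms obtain u v c where
    "(T = u @ v \<and> T' = u @ c # v) \<or> (\<exists>d. d \<noteq> c \<and> T = u @ d # v \<and> T' = u @ c # v)
      \<or> (T = u @ c # v \<and> T' = u @ v)"
    unfolding single_edit_def by blast
  then show ?thesis
  proof (elim disjE exE conjE)
    assume "T = u @ v" "T' = u @ c # v"
    then show ?thesis by (intro that[of u "[]" v "[c]"]) simp_all
  next
    fix d assume "T = u @ d # v" "T' = u @ c # v"
    then show ?thesis by (intro that[of u "[d]" v "[c]"]) simp_all
  next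
    assume "T = u @ c # v" "T' = u @ v"
    then show ?thesis by (intro that[of u "[c]" v "[]"]) simp_all
  qed
qed

lemma start_within_head_if_not_suffix_of_tail:
  assumes "s = u @ w @ v" "length w \<le> 1" "s = p @ z" "\<not> suffix z v"
  shows "length p \<le> length u"
proof (rule ccontr)
  assume "\<not> length p \<le> length u"
  moreover have "length s = length p + length z" using assms(3) by simp
  moreover have "length s = length u + length w + length v" using assms(1) by simp
  ultimately have "length z \<le> length v" using assms(2) by linarith
  moreover have "suffix z s" using assms(3) unfolding suffix_def by blast
  moreover have "suffix v s" using assms(1) unfolding suffix_def by (intro exI[of _ "u @ w"]) simp
  ultimately have "suffix z v" using suffix_length_suffix by blast
  with assms(4) show False by contradiction
qed

lemma drop_prefix_of_overlapping_factor:
  assumes "s = u @ t" "s = p @ z @ q" "length p \<le> length u" "length u \<le> length (p @ z)"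
  shows "prefix (drop (length p) u) z"
proof -
  have "drop (length p) s = drop (length p) u @ t" unfolding assms(1) using assms(3) by simp
  moreover have "drop (length p) s = z @ q" unfolding assms(2) by simp
  ultimately have "prefix (drop (length p) u) (z @ q)" by simp
  then show ?thesis
    using assms(4) prefix_length_prefix[of "drop (length p) u" "z @ q" z] by simp
qed

(* For a prefix-closed S this is the longest prefix of t lying in S. *)
definition maximal_prefix_in :: "'a list set \<Rightarrow> 'a list \<Rightarrow> 'a list \<Rightarrow> bool" where
  "maximal_prefix_in S t x \<longleftrightarrow> prefix x t \<and> x \<in> S \<and> (x = t \<or> take (Suc (length x)) t \<notin> S)"

lemma maximal_prefix_in_unique:
  assumes closed: "\<And>x y. prefix x y \<Longrightarrow> y \<in> S \<Longrightarrow> x \<in> S"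
    and "maximal_prefix_in S t x" "maximal_prefix_in S t x'"
  shows "x = x'"
proof -
  have "x = x'" if max: "maximal_prefix_in S t x" "maximal_prefix_in S t x'"
    and le: "length x \<le> length x'" for x x'
  proof (rule ccontr)
    assume "x \<noteq> x'"
    have "prefix x t" "prefix x' t" "x' \<in> S" using max unfolding maximal_prefix_in_def by auto
    then have "prefix x x'" using le prefix_length_prefix by blast
    with \<open>x \<noteq> x'\<close> have less: "length x < length x'"
      using prefix_length_less[of x x'] by (simp add: strict_prefix_def)
    then have "x \<noteq> t" using \<open>prefix x' t\<close> prefix_length_le by fastforce
    then have "take (Suc (length x)) t \<notin> S" using max(1) unfolding maximal_prefix_in_def by blast
    moreover have "take (Suc (length x)) t = take (Suc (length x)) x'"
      using \<open>prefix x' t\<close> less by (auto simp: prefix_def)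
    ultimately show False using closed[OF take_is_prefix \<open>x' \<in> S\<close>] by simp
  qed
  then show ?thesis using assms(2,3) by (metis nat_le_linear)
qed

lemma maximal_prefix_in_Substr_unique:
  "maximal_prefix_in (Substr T) t x \<Longrightarrow> maximal_prefix_in (Substr T) t x' \<Longrightarrow> x = x'"
  using maximal_prefix_in_unique[of "Substr T" t x x'] Substr_sublist_closed prefix_imp_sublist
  by blast

locale single_char_edit =
  fixes T T' u w0 w v :: "'a list"
  assumes T_eq: "T = u @ w0 @ v" and T'_eq: "T' = u @ w @ v" and short: "length w \<le> 1"
begin

lemma suffix_start_of_new_extension:
  assumes x: "x \<in> LeftM T" and new: "x @ [c] \<in> Substr T'" "x @ [c] \<notin> Substr T"
  obtains j where "j \<in> left_maximal_suffix_starts T u"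
    "maximal_prefix_in (Substr T) (drop j T') x" "drop j T' ! length x = c"
proof -
  obtain p q where occ: "T' = p @ x @ c # q"
    using new(1) unfolding Substr_def sublist_def by auto
  have "\<not> suffix (x @ c # q) v"
  proof
    assume "suffix (x @ c # q) v"
    then obtain v' where "T = (u @ w0 @ v') @ (x @ [c]) @ q" unfolding T_eq suffix_def by auto
    with new(2) show False using Substr_appendI by blast
  qed
  then have starts: "length p \<le> length u"
    using start_within_head_if_not_suffix_of_tail[OF T'_eq short, of p] occ by simp
  have "length u < length (p @ x @ [c])"
  proof (rule ccontr)
    assume "\<not> ?thesis"
    moreover have "prefix (p @ x @ [c]) T'" using occ by simp
    moreover have "prefix u T'" using T'_eq by simp
    ultimately have "prefix (p @ x @ [c]) u" using prefix_length_prefix not_less by blast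
    then obtain u' where "T = p @ (x @ [c]) @ (u' @ w0 @ v)" unfolding T_eq prefix_def by auto
    with new(2) show False using Substr_appendI by blast
  qed
  then have "prefix (drop (length p) u) x"
    using drop_prefix_of_overlapping_factor[of T' u "w @ v" p x "c # q"] T'_eq occ starts by simp
  then have "length p \<in> left_maximal_suffix_starts T u"
    using starts LeftM_prefix_closed[OF x] unfolding left_maximal_suffix_starts_def by blast
  moreover have "drop (length p) T' = x @ c # q" using occ by simp
  moreover have "x \<in> Substr T" using x LeftM_Substr by blast
  ultimately show ?thesis using that[of "length p"] new(2) unfolding maximal_prefix_in_def by simp
qed

lemma suffix_start_of_new_suffix:
  assumes x: "x \<in> LeftM T" and new: "x \<in> Suffixes T'" "x \<notin> Suffixes T"
  obtains j where "j \<in> left_maximal_suffix_starts T u"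
    "maximal_prefix_in (Substr T) (drop j T') x"
proof -
  obtain p where occ: "T' = p @ x" using new(1) unfolding Suffixes_def suffix_def by auto
  have "\<not> suffix x v" using new(2) unfolding T_eq Suffixes_def suffix_def by auto
  then have starts: "length p \<le> length u"
    using start_within_head_if_not_suffix_of_tail[OF T'_eq short occ] by simp
  have "length u \<le> length (p @ x)" using T'_eq occ by (simp add: arg_cong[OF occ, of length])
  then have "prefix (drop (length p) u) x"
    using drop_prefix_of_overlapping_factor[of T' u "w @ v" p x "[]"] T'_eq occ starts by simp
  then have "length p \<in> left_maximal_suffix_starts T u"
    using starts LeftM_prefix_closed[OF x] unfolding left_maximal_suffix_starts_def by blast
  moreover have "drop (length p) T' = x" using occ by simp
  moreover have "x \<in> Substr T" using x LeftM_Substr by blast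
  ultimately show ?thesis using that[of "length p"] unfolding maximal_prefix_in_def by simp
qed

lemma finite_left_maximal_suffix_starts: "finite (left_maximal_suffix_starts T u)"
  by (rule finite_subset[of _ "{..length u}"]) (auto simp: left_maximal_suffix_starts_def)

lemma card_left_maximal_suffix_starts_le_size: "card (left_maximal_suffix_starts T u) \<le> cdawg_size T + 1"
  by (rule order_trans[OF card_left_maximal_suffix_starts card_MaxRep_le]) (simp add: T_eq)

lemma card_new_RightM_le:
  "card (LeftM T \<inter> (RightM T' - RightM T)) \<le> card (left_maximal_suffix_starts T u)"
proof (rule card_le_if_inj_on_rel[OF finite_left_maximal_suffix_starts])
  fix x assume "x \<in> LeftM T \<inter> (RightM T' - RightM T)"
  then have x: "x \<in> LeftM T" "x \<in> Substr T" "x \<in> RightM T'" "x \<notin> RightM T"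
    using LeftM_Substr by auto
  from x(3) consider "x \<in> Suffixes T'"
    | a b where "a \<noteq> b" "x @ [a] \<in> Substr T'" "x @ [b] \<in> Substr T'"
    unfolding RightM_def by blast
  then show "\<exists>j. j \<in> left_maximal_suffix_starts T u \<and> maximal_prefix_in (Substr T) (drop j T') x"
  proof cases
    case 1
    moreover have "x \<notin> Suffixes T" using x(2,4) unfolding RightM_def by blast
    ultimately show ?thesis using suffix_start_of_new_suffix[OF x(1)] by metis
  next
    case 2
    then obtain c where "x @ [c] \<in> Substr T'" "x @ [c] \<notin> Substr T"
      using x(2,4) unfolding RightM_def by blast
    then show ?thesis using suffix_start_of_new_extension[OF x(1)] by metis
  qed
next
  fix x x' j
  assume "maximal_prefix_in (Substr T) (drop j T') x" "maximal_prefix_in (Substr T) (drop j T') x'"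
  then show "x = x'" by (rule maximal_prefix_in_Substr_unique)
qed

lemma sum_new_extensions_le:
  "(\<Sum>x\<in>LeftM T. card {c. x @ [c] \<in> Substr T' - Substr T})
    \<le> card (left_maximal_suffix_starts T u)"
proof -
  let ?P = "SIGMA x:LeftM T. {c. x @ [c] \<in> Substr T' - Substr T}"
  have "(\<Sum>x\<in>LeftM T. card {c. x @ [c] \<in> Substr T' - Substr T}) = card ?P"
  proof (rule card_SigmaI[symmetric, OF finite_LeftM, rule_format])
    fix x
    show "finite {c. x @ [c] \<in> Substr T' - Substr T}"
      by (rule finite_subset[OF _ finite_right_extensions[of x T']]) auto
  qed
  also have "card ?P \<le> card (left_maximal_suffix_starts T u)"
  proof (rule card_le_if_inj_on_rel[OF finite_left_maximal_suffix_starts])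
    fix xc assume "xc \<in> ?P"
    then obtain x c where "xc = (x, c)" "x \<in> LeftM T" "x @ [c] \<in> Substr T'" "x @ [c] \<notin> Substr T"
      by auto
    then show "\<exists>j. j \<in> left_maximal_suffix_starts T u \<and>
        maximal_prefix_in (Substr T) (drop j T') (fst xc) \<and> drop j T' ! length (fst xc) = snd xc"
      using suffix_start_of_new_extension by (metis fst_conv snd_conv)
  next
    fix xc xc' j
    assume "maximal_prefix_in (Substr T) (drop j T') (fst xc) \<and> drop j T' ! length (fst xc) = snd xc"
      "maximal_prefix_in (Substr T) (drop j T') (fst xc') \<and> drop j T' ! length (fst xc') = snd xc'"
    then show "xc = xc'"
      using maximal_prefix_in_Substr_unique by (metis prod_eq_iff)
  qed
  finally show ?thesis .
qed

end

lemma Dout_le_Dout_plus_new: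
  "Dout T' x \<le> Dout T x + card {c. x @ [c] \<in> Substr T' - Substr T}"
proof -
  have "Dout T' x \<le> card ({c. x @ [c] \<in> Substr T} \<union> {c. x @ [c] \<in> Substr T' - Substr T})"
    unfolding Dout_def by (rule card_mono) (auto intro: finite_right_extensions)
  also have "\<dots> \<le> Dout T x + card {c. x @ [c] \<in> Substr T' - Substr T}"
    unfolding Dout_def by (rule card_Un_le)
  finally show ?thesis .
qed

lemma sum_Dout_LeftM_le:
  assumes "X \<subseteq> LeftM T"
  shows "(\<Sum>x\<in>X. Dout T x) \<le> cdawg_size T + card (X - MaxRep T)"
proof -
  have "finite X" using assms finite_LeftM finite_subset by blast
  then have "(\<Sum>x\<in>X. Dout T x) = (\<Sum>x\<in>X \<inter> MaxRep T. Dout T x) + (\<Sum>x\<in>X - MaxRep T. Dout T x)"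
    by (rule sum.Int_Diff)
  moreover have "(\<Sum>x\<in>X \<inter> MaxRep T. Dout T x) \<le> cdawg_size T"
    unfolding cdawg_size_def by (rule sum_mono2[OF finite_MaxRep]) auto
  moreover have "(\<Sum>x\<in>X - MaxRep T. Dout T x) \<le> (\<Sum>x\<in>X - MaxRep T. 1)"
  proof (rule sum_mono)
    fix x assume "x \<in> X - MaxRep T"
    then have "x \<in> Substr T" "x \<notin> RightM T" using assms LeftM_Substr unfolding MaxRep_def by auto
    then show "Dout T x \<le> 1" by (rule Dout_le_1_if_not_RightM)
  qed
  ultimately show ?thesis by simp
qed

theorem lemma12:
  fixes T T' :: "'a list"
  assumes "single_edit T T'"
  shows "(\<Sum>x \<in> (((MaxRep T' - MaxRep T) - {T'}) \<inter> LeftM T)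
                 \<union> ((MaxRep T' \<inter> MaxRep T) - {T'}). Dout T' x)
         \<le> 3 * cdawg_size T + 2"
proof -
  obtain u w0 w v where "single_char_edit T T' u w0 w v"
    using single_edit_decomposition[OF assms] single_char_edit.intro by metis
  then interpret single_char_edit T T' u w0 w v .
  define X where "X = (((MaxRep T' - MaxRep T) - {T'}) \<inter> LeftM T) \<union> ((MaxRep T' \<inter> MaxRep T) - {T'})"
  let ?new = "\<lambda>x. card {c. x @ [c] \<in> Substr T' - Substr T}"
  let ?J = "left_maximal_suffix_starts T u"
  have X_LeftM: "X \<subseteq> LeftM T" unfolding X_def MaxRep_def by blast
  have new_RightM: "card (X - MaxRep T) \<le> card ?J"
    by (rule order_trans[OF card_mono card_new_RightM_le]) (auto simp: X_def MaxRep_def finite_LeftM)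
  have new_extensions: "(\<Sum>x\<in>X. ?new x) \<le> card ?J"
    by (rule order_trans[OF sum_mono2[OF finite_LeftM X_LeftM] sum_new_extensions_le]) simp
  have "(\<Sum>x\<in>X. Dout T' x) \<le> (\<Sum>x\<in>X. Dout T x + ?new x)"
    by (rule sum_mono) (rule Dout_le_Dout_plus_new)
  also have "\<dots> = (\<Sum>x\<in>X. Dout T x) + (\<Sum>x\<in>X. ?new x)" by (rule sum.distrib)
  also have "\<dots> \<le> cdawg_size T + card (X - MaxRep T) + card ?J"
    using sum_Dout_LeftM_le[OF X_LeftM] new_extensions by linarith
  also have "\<dots> \<le> 3 * cdawg_size T + 2" using new_RightM card_left_maximal_suffix_starts_le_size by linarith
  finally show ?thesis unfolding X_def .
qed

end
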